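(* Let $d\ge2$, $G$ a $d$-regular graph on $n$ vertices, $F$ regular, $T=F^{-1}(1-1/d)$ and $p=T\cdot(1-1/d)^d$. Then for every equilibrium $\mathbf{T}'\in\mathcal{N}_{p\cdot\mathbf{1}}$, $$\mathcal{R}(p\cdot\mathbf{1},\mathbf{T}')\ \ge\ c\cdot\mathcal{R}(p\cdot\mathbf{1},T\cdot\mathbf{1})$$ for an absolute constant $c>0$ (one may take $c=\tfrac12(1-1/e)$).
   Context: Public-goods pricing game: $n$ buyers are the vertices of an undirected graph $G=([n],E)$; $N(i)=\{j:(i,j)\in E\}$ (so $i\notin N(i)$); $G$ is $d$-regular if $|N(i)|=d$ for all $i$. Values i.i.d. with cumulative distribution function $F$, $F(\infty)=1$. An equilibrium for price vector $\mathbf{p}$ is $\mathbf{T}\in[0,\infty]^n$ (buyer $i$ purchases iff $v_i\ge T_i$) with $T_i=p_i/\prod_{j\in N(i)}F(T_j)$ for all $i$ (convention $c/0=\infty$); $\mathcal{N}_{\mathbf{p}}$ is the set of equilibria; $\mathcal{R}(\mathbf{p},\mathbf{T})=\sum_ip_i(1-F(T_i))$; $p\cdot\mathbf{1}$ is the uniform price vector. $F$ is regular: atomless, supported on an interval in $[0,\infty)$ with positive density $f$ there, and $\phi(x)=x-\frac{1-F(x)}{f(x)}$ non-decreasing. $F^{-1}(q)=\min\{x:F(x)=q\}$. *)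

theory Defs
  imports "HOL-Analysis.Analysis"
begin

definition simple_graph :: "nat \<Rightarrow> (nat \<Rightarrow> nat \<Rightarrow> bool) \<Rightarrow> bool" where
  "simple_graph n E \<longleftrightarrow> (\<forall>i j. E i j \<longrightarrow> i < n \<and> j < n) \<and>
     (\<forall>i j. E i j \<longrightarrow> E j i) \<and> (\<forall>i. \<not> E i i)"

definition nbrs :: "nat \<Rightarrow> (nat \<Rightarrow> nat \<Rightarrow> bool) \<Rightarrow> nat \<Rightarrow> nat set" where
  "nbrs n E i = {j. j < n \<and> E i j}"

definition regular_graph :: "nat \<Rightarrow> (nat \<Rightarrow> nat \<Rightarrow> bool) \<Rightarrow> nat \<Rightarrow> bool" where
  "regular_graph n E d \<longleftrightarrow> (\<forall>i<n. card (nbrs n E i) = d)"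

definition regular_dist :: "(real \<Rightarrow> real) \<Rightarrow> bool" where
  "regular_dist F \<longleftrightarrow> mono F \<and> (F \<longlongrightarrow> 0) at_bot \<and> (F \<longlongrightarrow> 1) at_top \<and>
     continuous_on UNIV F \<and>
     (\<exists>S f. is_interval S \<and> S \<subseteq> {0..} \<and> interior S \<noteq> {} \<and>
        (\<forall>x. (\<forall>y\<in>S. x < y) \<longrightarrow> F x = 0) \<and>
        (\<forall>x. (\<forall>y\<in>S. y < x) \<longrightarrow> F x = 1) \<and>
        (\<forall>x\<in>interior S. (F has_real_derivative f x) (at x) \<and> f x > 0) \<and>
        mono_on (interior S) (\<lambda>x. x - (1 - F x) / f x))"

definition Fext :: "(real \<Rightarrow> real) \<Rightarrow> ereal \<Rightarrow> real" where
  "Fext F t = (case t of ereal x \<Rightarrow> F x | PInfty \<Rightarrow> 1 | MInfty \<Rightarrow> 0)"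

definition Finv :: "(real \<Rightarrow> real) \<Rightarrow> real \<Rightarrow> real" where
  "Finv F q = (LEAST x. F x = q)"

definition ediv :: "real \<Rightarrow> real \<Rightarrow> ereal" where
  "ediv c q = (if q = 0 then \<infinity> else ereal (c / q))"

definition is_equilibrium ::
  "nat \<Rightarrow> (nat \<Rightarrow> nat \<Rightarrow> bool) \<Rightarrow> (real \<Rightarrow> real) \<Rightarrow> (nat \<Rightarrow> real) \<Rightarrow> (nat \<Rightarrow> ereal) \<Rightarrow> bool" where
  "is_equilibrium n E F p T \<longleftrightarrow>
     (\<forall>i<n. 0 \<le> T i \<and> T i = ediv (p i) (\<Prod>j\<in>nbrs n E i. Fext F (T j)))"

definition revenue :: "nat \<Rightarrow> (real \<Rightarrow> real) \<Rightarrow> (nat \<Rightarrow> real) \<Rightarrow> (nat \<Rightarrow> ereal) \<Rightarrow> real" where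
  "revenue n F p T = (\<Sum>i<n. p i * (1 - Fext F (T i)))"

end

theory Submission
  imports Defs
begin

text \<open>Let a(i) = 1 - F(T'(i)) be the probability that buyer i purchases. At an
  equilibrium every buyer satisfies d a(i) + (sum of a(j) over the neighbours j of i) \<ge> 1 - 1/e:
  if the neighbours together buy with probability less than 1 - 1/e, then by the Weierstrass
  product inequality the product of their F(T'(j)) exceeds 1/e \<ge> (1 - 1/d)^d, so T'(i) \<le> T and
  a(i) \<ge> 1 - F(T) = 1/d. Summing over all buyers and double counting the edges of the d-regular
  graph gives 2 d (sum of all a(i)) \<ge> n (1 - 1/e), while the uniform threshold T earns exactly
  n p / d.\<close>

definition purchase_prob :: "(real \<Rightarrow> real) \<Rightarrow> ereal \<Rightarrow> real" where
  "purchase_prob F t = 1 - Fext F t"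

lemma revenue_uniform_price:
  "revenue n F (\<lambda>_. p) T = p * (\<Sum>i<n. purchase_prob F (T i))"
  by (simp add: revenue_def purchase_prob_def sum_distrib_left)

lemma prod_one_minus_ge_one_minus_sum:
  fixes x :: "'b \<Rightarrow> 'a::linordered_idom"
  assumes "finite A" "\<And>j. j \<in> A \<Longrightarrow> 0 \<le> x j \<and> x j \<le> 1"
  shows "1 - sum x A \<le> (\<Prod>j\<in>A. 1 - x j)"
  using assms
proof (induction A rule: finite_induct)
  case empty
  then show ?case by simp
next
  case (insert a A)
  have xa: "0 \<le> x a" "x a \<le> 1" and sum_ge_0: "0 \<le> sum x A"
    using insert.prems by (auto intro: sum_nonneg)
  have "1 - sum x (insert a A) \<le> (1 - x a) * (1 - sum x A)"
    using insert.hyps xa sum_ge_0 by (simp add: algebra_simps)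
  also have "\<dots> \<le> (1 - x a) * (\<Prod>j\<in>A. 1 - x j)"
    using insert xa by (intro mult_left_mono) auto
  finally show ?case
    using insert.hyps by simp
qed

lemma mono_tendsto_at_bot_le:
  fixes f :: "'a::linorder \<Rightarrow> 'b::linorder_topology"
  assumes "mono f" "(f \<longlongrightarrow> l) at_bot"
  shows "l \<le> f x"
  using assms by (intro tendsto_upperbound[of f l at_bot])
    (auto simp: eventually_at_bot_linorder mono_def)

lemma mono_tendsto_at_top_ge:
  fixes f :: "'a::linorder \<Rightarrow> 'b::linorder_topology"
  assumes "mono f" "(f \<longlongrightarrow> l) at_top"
  shows "f x \<le> l"
  using assms by (intro tendsto_lowerbound[of f l at_top])
    (auto simp: eventually_at_top_linorder mono_def)

lemma regular_dist_bounds: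
  assumes "regular_dist F"
  shows "0 \<le> F x" "F x \<le> 1"
  using assms mono_tendsto_at_bot_le mono_tendsto_at_top_ge
  unfolding regular_dist_def by blast+

lemma purchase_prob_bounds:
  assumes "regular_dist F"
  shows "0 \<le> purchase_prob F t" "purchase_prob F t \<le> 1"
  using regular_dist_bounds[OF assms]
  by (cases t; simp add: purchase_prob_def Fext_def)+

lemma regular_dist_neg:
  assumes "regular_dist F" "x < 0"
  shows "F x = 0"
proof -
  obtain S where "S \<subseteq> {0..}" "\<forall>x. (\<forall>y\<in>S. x < y) \<longrightarrow> F x = 0"
    using assms(1) unfolding regular_dist_def by blast
  then show ?thesis
    using assms(2) by force
qed

lemma regular_dist_attains:
  assumes "regular_dist F" "0 < q" "q < 1"
  obtains x where "F x = q"
proof -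
  have cont: "continuous_on UNIV F" and lim0: "(F \<longlongrightarrow> 0) at_bot"
    and lim1: "(F \<longlongrightarrow> 1) at_top"
    using assms(1) unfolding regular_dist_def by auto
  obtain a where a: "\<And>y. y \<le> a \<Longrightarrow> F y < q"
    using order_tendstoD(2)[OF lim0 \<open>0 < q\<close>] by (auto simp: eventually_at_bot_linorder)
  obtain b where b: "\<And>y. b \<le> y \<Longrightarrow> q < F y"
    using order_tendstoD(1)[OF lim1 \<open>q < 1\<close>] by (auto simp: eventually_at_top_linorder)
  have "\<exists>x. min a b \<le> x \<and> x \<le> b \<and> F x = q"
    using a b by (intro IVT') (auto intro: continuous_on_subset[OF cont] less_imp_le)
  then show ?thesis
    using that by blast
qed

lemma regular_dist_Finv:
  assumes "regular_dist F" "0 < q" "q < 1"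
  shows "F (Finv F q) = q" "0 \<le> Finv F q"
proof -
  define S where "S = {x. F x = q}"
  have "S \<noteq> {}"
    using regular_dist_attains[OF assms] by (auto simp: S_def)
  moreover have nonneg: "0 \<le> x" if "x \<in> S" for x
    using that regular_dist_neg[OF assms(1), of x] \<open>0 < q\<close> by (force simp: S_def)
  then have "bdd_below S"
    by (meson bdd_below_def)
  moreover have "closed S"
    using assms(1) unfolding S_def regular_dist_def
    by (intro closed_Collect_eq continuous_on_const) auto
  ultimately have Inf_in: "Inf S \<in> S"
    by (rule closed_contains_Inf)
  have "Finv F q = Inf S"
    unfolding Finv_def
    by (rule Least_equality) (use Inf_in \<open>bdd_below S\<close> in \<open>auto simp: S_def intro: cInf_lower\<close>)
  with Inf_in nonneg show "F (Finv F q) = q" "0 \<le> Finv F q"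
    by (auto simp: S_def)
qed

lemma sum_nbrs_double_count:
  assumes "simple_graph n E"
  shows "(\<Sum>i<n. \<Sum>j\<in>nbrs n E i. a j) = (\<Sum>j<n. real (card (nbrs n E j)) * a j)"
proof -
  have nbrs_filter: "nbrs n E i = {j \<in> {..<n}. E i j}" for i
    by (auto simp: nbrs_def)
  have "(\<Sum>i<n. \<Sum>j\<in>nbrs n E i. a j) = (\<Sum>i<n. \<Sum>j<n. if E i j then a j else 0)"
    unfolding nbrs_filter by (intro sum.cong refl sum.inter_filter) simp
  also have "\<dots> = (\<Sum>j<n. \<Sum>i<n. if E i j then a j else 0)"
    by (rule sum.swap)
  also have "\<dots> = (\<Sum>j<n. real (card (nbrs n E j)) * a j)"
  proof (intro sum.cong refl)
    fix j
    have "{i. i < n \<and> E i j} = nbrs n E j"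
      using assms by (auto simp: nbrs_def simple_graph_def)
    then show "(\<Sum>i<n. if E i j then a j else 0) = real (card (nbrs n E j)) * a j"
      by (simp add: sum.If_cases Int_def lessThan_def)
  qed
  finally show ?thesis .
qed

lemma sum_nbrs_regular:
  assumes "simple_graph n E" "regular_graph n E d"
  shows "(\<Sum>i<n. \<Sum>j\<in>nbrs n E i. a j) = real d * (\<Sum>i<n. a i)"
  using assms(2) unfolding sum_nbrs_double_count[OF assms(1)] sum_distrib_left
  by (intro sum.cong) (auto simp: regular_graph_def)

lemma equilibrium_local_demand:
  assumes F: "regular_dist F" and eq: "is_equilibrium n E F (\<lambda>_. p) T'" and "i < n"
    and "d > 0" and FT: "F T = 1 - 1 / real d" and "0 \<le> T"
    and "0 \<le> c" and "p \<le> T * c"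
  shows "1 - c \<le> real d * purchase_prob F (T' i) + (\<Sum>j\<in>nbrs n E i. purchase_prob F (T' j))"
proof (cases "1 - c \<le> (\<Sum>j\<in>nbrs n E i. purchase_prob F (T' j))")
  case True
  then show ?thesis
    using purchase_prob_bounds[OF F, of "T' i"] by (simp add: add_increasing)
next
  case False
  define P where "P = (\<Prod>j\<in>nbrs n E i. Fext F (T' j))"
  have "1 - (\<Sum>j\<in>nbrs n E i. purchase_prob F (T' j)) \<le> P"
    unfolding P_def purchase_prob_def
    using prod_one_minus_ge_one_minus_sum[of "nbrs n E i" "\<lambda>j. 1 - Fext F (T' j)"]
      purchase_prob_bounds[OF F]
    by (simp add: nbrs_def purchase_prob_def)
  with False have "c < P"
    by linarith
  with \<open>0 \<le> c\<close> have T'_i: "T' i = ereal (p / P)"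
    using eq \<open>i < n\<close> by (simp add: is_equilibrium_def ediv_def P_def)
  have "T * c \<le> T * P"
    using \<open>c < P\<close> \<open>0 \<le> T\<close> by (simp add: mult_left_mono)
  with \<open>p \<le> T * c\<close> have "p \<le> T * P"
    by linarith
  then have "p / P \<le> T"
    using \<open>c < P\<close> \<open>0 \<le> c\<close> by (simp add: divide_le_eq)
  then have "F (p / P) \<le> F T"
    using F by (simp add: regular_dist_def monoD)
  with T'_i FT have "1 / real d \<le> purchase_prob F (T' i)"
    by (simp add: purchase_prob_def Fext_def)
  then have "1 \<le> real d * purchase_prob F (T' i)"
    using \<open>d > 0\<close> by (simp add: field_simps)
  moreover have "0 \<le> (\<Sum>j\<in>nbrs n E i. purchase_prob F (T' j))"
    using purchase_prob_bounds[OF F] by (simp add: sum_nonneg)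
  ultimately show ?thesis
    using \<open>0 \<le> c\<close> by linarith
qed

theorem lemma4p3:
  fixes n d :: nat and E :: "nat \<Rightarrow> nat \<Rightarrow> bool" and F :: "real \<Rightarrow> real"
    and T :: real and p :: real and T' :: "nat \<Rightarrow> ereal"
  assumes "d \<ge> 2"
    and "simple_graph n E" and "regular_graph n E d"
    and "regular_dist F"
    and "T = Finv F (1 - 1 / real d)"
    and "p = T * (1 - 1 / real d) ^ d"
    and "is_equilibrium n E F (\<lambda>_. p) T'"
  shows "revenue n F (\<lambda>_. p) T' \<ge> (1 / 2) * (1 - exp (-1)) * revenue n F (\<lambda>_. p) (\<lambda>_. ereal T)"
proof -
  define a where "a i = purchase_prob F (T' i)" for i
  have FT: "F T = 1 - 1 / real d" and "0 \<le> T"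
    using regular_dist_Finv[OF assms(4), of "1 - 1 / real d"] assms(1,5) by auto
  have "p \<le> T * exp (-1)"
    using exp_ge_one_minus_x_over_n_power_n[of 1 d] assms(1,6) \<open>0 \<le> T\<close>
    by (simp add: mult_left_mono)
  then have "\<And>i. i < n \<Longrightarrow> 1 - exp (-1) \<le> real d * a i + (\<Sum>j\<in>nbrs n E i. a j)"
    unfolding a_def using equilibrium_local_demand assms(1,4,7) FT \<open>0 \<le> T\<close> by simp
  then have "real n * (1 - exp (-1)) \<le> (\<Sum>i<n. real d * a i + (\<Sum>j\<in>nbrs n E i. a j))"
    using sum_mono[of "{..<n}" "\<lambda>_. 1 - exp (-1)" "\<lambda>i. real d * a i + (\<Sum>j\<in>nbrs n E i. a j)"]
    by simp
  also have "\<dots> = 2 * real d * (\<Sum>i<n. a i)"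
    by (simp add: sum.distrib sum_nbrs_regular[OF assms(2,3)] sum_distrib_left mult.assoc)
  finally have "real n * (1 - exp (-1)) / (2 * real d) \<le> (\<Sum>i<n. a i)"
    using assms(1) by (simp add: divide_le_eq mult.commute)
  moreover have "0 \<le> p"
    using assms(1,6) \<open>0 \<le> T\<close> by simp
  ultimately have "p * (real n * (1 - exp (-1)) / (2 * real d)) \<le> p * (\<Sum>i<n. a i)"
    by (rule mult_left_mono)
  then show ?thesis
    unfolding revenue_uniform_price a_def by (simp add: purchase_prob_def Fext_def FT field_simps)
qed

end
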